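(* Let $k \ge 2$ and $2 \le n_1 \le n_2 \le \cdots \le n_k$ be integers, and let $K_{n_1,\dots,n_k}$ be the complete $k$-partite graph with parts of sizes $n_1,\dots,n_k$. (i) If $n_1$ is even, then $\mathrm{sg_e}(K_{n_1,\dots,n_k}) = \sum_{j=2}^k n_j + 1$ if $n_2 \in \{n_1, n_1+1\}$, and $\mathrm{sg_e}(K_{n_1,\dots,n_k}) = \sum_{j=2}^k n_j$ otherwise. (ii) If $n_1$ is odd, then $\mathrm{sg_e}(K_{n_1,\dots,n_k}) = \sum_{j=2}^k n_j + 2$ if $n_2 = n_1$, and $\mathrm{sg_e}(K_{n_1,\dots,n_k}) = \sum_{j=2}^k n_j$ otherwise.
   Context: All graphs are finite, simple and connected. A set $S \subseteq V(G)$ is a strong edge geodetic set of $G$ if one can assign to every unordered pair $\{u,v\}$ of distinct vertices of $S$ either one shortest $u,v$-path $P_{uv}$ in $G$ or no path, in such a way that every edge of $G$ lies on at least one of the assigned paths. The strong edge geodetic number $\mathrm{sg_e}(G)$ is the minimum cardinality of a strong edge geodetic set of $G$. *)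

theory Defs
  imports Main
begin

definition is_path :: "'a set \<Rightarrow> 'a set set \<Rightarrow> 'a list \<Rightarrow> 'a \<Rightarrow> 'a \<Rightarrow> bool" where
  "is_path V E p u v \<longleftrightarrow> p \<noteq> [] \<and> hd p = u \<and> last p = v \<and> distinct p \<and> set p \<subseteq> V \<and>
     (\<forall>i. Suc i < length p \<longrightarrow> {p ! i, p ! Suc i} \<in> E)"

definition is_shortest_path :: "'a set \<Rightarrow> 'a set set \<Rightarrow> 'a list \<Rightarrow> 'a \<Rightarrow> 'a \<Rightarrow> bool" where
  "is_shortest_path V E p u v \<longleftrightarrow> is_path V E p u v \<and>
     (\<forall>q. is_path V E q u v \<longrightarrow> length p \<le> length q)"

definition path_edges :: "'a list \<Rightarrow> 'a set set" where
  "path_edges p = {{p ! i, p ! Suc i} | i. Suc i < length p}"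

text \<open>Each unordered pair {u,v} of distinct vertices of S is assigned either one
shortest u,v-path (Some p) or no path (None); every edge must lie on an assigned path.\<close>
definition strong_edge_geodetic :: "'a set \<Rightarrow> 'a set set \<Rightarrow> 'a set \<Rightarrow> bool" where
  "strong_edge_geodetic V E S \<longleftrightarrow> S \<subseteq> V \<and>
     (\<exists>P :: 'a set \<Rightarrow> 'a list option.
        (\<forall>u\<in>S. \<forall>v\<in>S. u \<noteq> v \<longrightarrow>
            (\<forall>p. P {u, v} = Some p \<longrightarrow> is_shortest_path V E p u v \<or> is_shortest_path V E p v u)) \<and>
        (\<forall>e\<in>E. \<exists>u\<in>S. \<exists>v\<in>S. u \<noteq> v \<and> (\<exists>p. P {u, v} = Some p \<and> e \<in> path_edges p)))"

definition sg_e :: "'a set \<Rightarrow> 'a set set \<Rightarrow> nat" where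
  "sg_e V E = (LEAST m. \<exists>S. finite S \<and> strong_edge_geodetic V E S \<and> card S = m)"

definition kpart_V :: "nat \<Rightarrow> (nat \<Rightarrow> nat) \<Rightarrow> (nat \<times> nat) set" where
  "kpart_V k n = {(i, x). 1 \<le> i \<and> i \<le> k \<and> x < n i}"

definition kpart_E :: "nat \<Rightarrow> (nat \<Rightarrow> nat) \<Rightarrow> (nat \<times> nat) set set" where
  "kpart_E k n = {{a, b} | a b. a \<in> kpart_V k n \<and> b \<in> kpart_V k n \<and> fst a \<noteq> fst b}"

end

theory Submission
  imports Defs "HOL-Library.Disjoint_Sets"
begin

text \<open>In a complete multipartite graph a shortest path between two vertices of one part has exactly
  one interior vertex, lying in another part. If \<open>S\<close> is strong edge geodetic, the vertices outside
  \<open>S\<close> lie in a single part, since an edge between two of them lies on no geodesic with ends in \<open>S\<close>.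
  For such a vertex \<open>a\<close> and another part \<open>j\<close>, every edge from \<open>a\<close> to part \<open>j\<close> lies on a geodesic
  \<open>u a v\<close> with \<open>u, v\<close> in part \<open>j\<close>; so the pairs routed through \<open>a\<close> form an edge cover of part \<open>j\<close>,
  disjoint from those of the other omitted vertices. Since \<open>K\<^sub>m\<close> has at most \<open>m - 1\<close> disjoint edge
  covers, and at most \<open>m - 2\<close> for odd \<open>m\<close>, at most \<open>min n\<^sub>1 (max_edge_covers n\<^sub>2)\<close> vertices are
  omitted. Conversely, that many vertices of part 1 can be omitted: colour the pairs of every
  other part so that each vertex meets every colour, and route each pair through the vertex of
  part 1 named by its colour.\<close>

text \<open>The maximal number of pairwise disjoint edge covers of \<open>K\<^sub>m\<close>, \<open>m \<ge> 2\<close>.\<close>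

definition max_edge_covers :: "nat \<Rightarrow> nat" where
  "max_edge_covers m = (if even m then m - 1 else m - 2)"

lemma max_edge_covers_le: "max_edge_covers m \<le> m"
  unfolding max_edge_covers_def by auto

lemma max_edge_covers_mono: "m \<le> m' \<Longrightarrow> max_edge_covers m \<le> max_edge_covers m'"
  unfolding max_edge_covers_def by presburger

lemma min_max_edge_covers:
  assumes "2 \<le> m" "m \<le> m'"
  shows "min m (max_edge_covers m') =
    (if even m \<and> m' \<in> {m, m + 1} then m - 1 else if odd m \<and> m' = m then m - 2 else m)"
proof (cases "m' \<le> m + 1")
  case True
  then consider "m' = m" | "m' = m + 1" using assms(2) by linarith
  then show ?thesis using assms(1) by cases (auto simp: max_edge_covers_def)
next
  case False
  then have "m \<le> max_edge_covers m'" unfolding max_edge_covers_def by auto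
  then show ?thesis using False by auto
qed

lemma le_max_edge_covers:
  assumes m: "2 \<le> m" and t: "t * ((m + 1) div 2) \<le> m choose 2"
  shows "t \<le> max_edge_covers m"
proof (cases "even m")
  case True
  then obtain r where r: "m = 2 * r" "1 \<le> r" using m by (auto elim!: evenE)
  have "m choose 2 = r * (2 * r - 1)" unfolding r(1) choose_two by (cases r) auto
  moreover have "(m + 1) div 2 = r" using r by simp
  ultimately have "t * r \<le> (2 * r - 1) * r" using t by (simp add: mult.commute)
  then show ?thesis using r True by (simp add: max_edge_covers_def)
next
  case False
  then obtain r where r: "m = 2 * r + 1" "1 \<le> r" using m by (auto elim!: oddE)
  have "m choose 2 = (2 * r + 1) * r" unfolding r(1) choose_two by simp
  moreover have "(m + 1) div 2 = r + 1" using r by simp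
  ultimately have t': "t * (r + 1) \<le> (2 * r + 1) * r" using t by simp
  have "t < 2 * r"
  proof (rule ccontr)
    assume "\<not> t < 2 * r"
    then have "2 * r * (r + 1) \<le> t * (r + 1)" by (intro mult_le_mono1) simp
    with t' r(2) show False by (simp add: algebra_simps)
  qed
  then show ?thesis using r False by (simp add: max_edge_covers_def)
qed

text \<open>The round-robin 1-factorisation of \<open>K\<^sub>q\<^sub>+\<^sub>1\<close> on \<open>{0..q}\<close>, \<open>q\<close> odd: the pair \<open>{x, y}\<close> of
  vertices below \<open>q\<close> gets colour \<open>(x + y) mod q\<close>, and \<open>q\<close> is joined to \<open>x\<close> in the one colour
  \<open>2 x mod q\<close> missing at \<open>x\<close>.\<close>
definition round_robin :: "nat \<Rightarrow> nat \<Rightarrow> nat \<Rightarrow> nat" where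
  "round_robin q x y =
     (if x = q then (2 * y) mod q else if y = q then (2 * x) mod q else (x + y) mod q)"

lemma round_robin_commute: "round_robin q x y = round_robin q y x"
  unfolding round_robin_def by (auto simp: add.commute)

lemma round_robin_surj:
  assumes q: "odd q" and r: "r < q" and b: "b \<le> q"
  shows "\<exists>b'\<le>q. b' \<noteq> b \<and> round_robin q b b' = r"
proof (cases "b = q")
  case True
  show ?thesis
  proof (cases "even r")
    case True
    then show ?thesis using \<open>b = q\<close> r q
      by (intro exI[of _ "r div 2"]) (auto simp: round_robin_def)
  next
    case False
    then have "2 * ((r + q) div 2) = r + q" using q by presburger
    then show ?thesis using \<open>b = q\<close> r
      by (intro exI[of _ "(r + q) div 2"]) (auto simp: round_robin_def)
  qed
next
  case False
  then have bq: "b < q" using b by auto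
  show ?thesis
  proof (cases "(2 * b) mod q = r")
    case True
    then show ?thesis using bq by (intro exI[of _ q]) (auto simp: round_robin_def)
  next
    case False
    define b' where "b' = (r + q - b) mod q"
    have "(b + b') mod q = (b + (r + q - b)) mod q"
      unfolding b'_def by (simp add: mod_add_right_eq)
    also have "\<dots> = r" using bq r by simp
    finally have "(b + b') mod q = r" .
    moreover have "b' < q" using bq unfolding b'_def by simp
    moreover have "b' \<noteq> b" using False \<open>(b + b') mod q = r\<close> by (auto simp: mult_2)
    ultimately show ?thesis using bq by (intro exI[of _ b']) (auto simp: round_robin_def)
  qed
qed

text \<open>For even \<open>m\<close> a 1-factorisation of \<open>K\<^sub>m\<close>; for odd \<open>m\<close> the vertex \<open>m - 1\<close> is joined to
  each \<open>x < m - 2\<close> in colour \<open>x\<close> and the remaining \<open>K\<^sub>m\<^sub>-\<^sub>1\<close> is 1-factorised, so that in both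
  cases every vertex meets all \<open>max_edge_covers m\<close> colours.\<close>
definition cover_colouring :: "nat \<Rightarrow> nat \<Rightarrow> nat \<Rightarrow> nat" where
  "cover_colouring m x y =
     (if even m then round_robin (m - 1) x y
      else if x = m - 1 then (if y < m - 2 then y else 0)
      else if y = m - 1 then (if x < m - 2 then x else 0)
      else round_robin (m - 2) x y)"

lemma cover_colouring_commute: "cover_colouring m x y = cover_colouring m y x"
  unfolding cover_colouring_def using round_robin_commute by auto

lemma cover_colouring_surj:
  assumes m: "2 \<le> m" and r: "r < max_edge_covers m" and b: "b < m"
  shows "\<exists>b'<m. b' \<noteq> b \<and> cover_colouring m b b' = r"
proof (cases "even m")
  case True
  then have "odd (m - 1)" "r < m - 1" "b \<le> m - 1" using m r b by (auto simp: max_edge_covers_def)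
  from round_robin_surj[OF this] obtain b' where "b' \<le> m - 1" "b' \<noteq> b" "round_robin (m - 1) b b' = r"
    by auto
  then show ?thesis using True m by (intro exI[of _ b']) (auto simp: cover_colouring_def)
next
  case odd: False
  then have m3: "3 \<le> m" "r < m - 2" using m r by (auto simp: max_edge_covers_def)
  show ?thesis
  proof (cases "b = m - 1")
    case True
    then show ?thesis using odd m3 by (intro exI[of _ r]) (auto simp: cover_colouring_def)
  next
    case False
    then have "odd (m - 2)" "r < m - 2" "b \<le> m - 2" using m3 b odd by auto
    from round_robin_surj[OF this] obtain b' where "b' \<le> m - 2" "b' \<noteq> b" "round_robin (m - 2) b b' = r"
      by auto
    then show ?thesis using odd m3 False by (intro exI[of _ b']) (auto simp: cover_colouring_def)
  qed
qed

lemma card_disjoint_edge_covers_le: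
  fixes A :: "'a set" and F :: "'b \<Rightarrow> 'a set set"
  assumes A: "finite A" "2 \<le> card A"
    and pairs: "\<And>i. i \<in> I \<Longrightarrow> F i \<subseteq> {e. e \<subseteq> A \<and> card e = 2}"
    and covers: "\<And>i. i \<in> I \<Longrightarrow> A \<subseteq> \<Union>(F i)"
    and disj: "disjoint_family_on F I"
  shows "card I \<le> max_edge_covers (card A)"
proof (cases "finite I")
  case False
  then show ?thesis by simp
next
  case finI: True
  define X where "X = {e. e \<subseteq> A \<and> card e = 2}"
  have finX: "finite X" unfolding X_def using A(1) by simp
  have half_le: "(card A + 1) div 2 \<le> card (F i)" if i: "i \<in> I" for i
  proof -
    have "\<Union>(F i) \<subseteq> A" using pairs[OF i] by auto
    then have "card A \<le> card (\<Union>(F i))"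
      using card_mono[OF _ covers[OF i]] finite_subset A(1) by blast
    also have "\<dots> \<le> (\<Sum>e\<in>F i. card e)" by (rule card_Union_le_sum_card)
    also have "\<dots> = (\<Sum>e\<in>F i. 2)" using pairs[OF i] by (intro sum.cong) auto
    also have "\<dots> = 2 * card (F i)" by simp
    finally show ?thesis by linarith
  qed
  have "card I * ((card A + 1) div 2) \<le> (\<Sum>i\<in>I. card (F i))"
    using sum_bounded_below[of I "(card A + 1) div 2" "\<lambda>i. card (F i)"] half_le by simp
  also have "\<dots> = card (\<Union>i\<in>I. F i)"
  proof (rule card_UN_disjoint[symmetric, OF finI])
    show "\<forall>i\<in>I. finite (F i)" using pairs finX finite_subset unfolding X_def by blast
    show "\<forall>i\<in>I. \<forall>j\<in>I. i \<noteq> j \<longrightarrow> F i \<inter> F j = {}" using disj by (simp add: disjoint_family_on_def)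
  qed
  also have "\<dots> \<le> card X" using pairs by (intro card_mono[OF finX]) (auto simp: X_def)
  also have "\<dots> = card A choose 2" unfolding X_def using n_subsets[OF A(1)] by simp
  finally show ?thesis using le_max_edge_covers A(2) by blast
qed

lemma path_edges_Cons_Cons: "path_edges (x # y # p) = insert {x, y} (path_edges (y # p))"
  unfolding path_edges_def
  by (auto simp: less_Suc_eq_0_disj)
    (metis nth_Cons_0 nth_Cons_Suc zero_less_Suc, metis nth_Cons_Suc Suc_less_eq)

lemma path_edges_singleton: "path_edges [x] = {}"
  unfolding path_edges_def by auto

lemma is_path_length_ge_2: "is_path V E p x y \<Longrightarrow> x \<noteq> y \<Longrightarrow> 2 \<le> length p"
  unfolding is_path_def by (cases p) (auto simp: Suc_le_eq)

lemma is_path_length_2: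
  assumes "is_path V E p x y" "length p = 2"
  shows "p = [x, y] \<and> {x, y} \<in> E"
proof -
  obtain a b where "p = [a, b]" using assms(2) by (auto simp: numeral_2_eq_2 length_Suc_conv)
  then show ?thesis using assms(1) unfolding is_path_def by force
qed

lemma is_path_length_3:
  assumes "is_path V E p x y" "length p = 3"
  shows "\<exists>w. p = [x, w, y] \<and> w \<in> V \<and> {x, w} \<in> E"
proof -
  obtain a b c where "p = [a, b, c]" using assms(2) by (auto simp: numeral_3_eq_3 length_Suc_conv)
  then show ?thesis using assms(1) unfolding is_path_def by force
qed

locale complete_multipartite =
  fixes k :: nat and n :: "nat \<Rightarrow> nat"
  assumes two_parts: "2 \<le> k" and n1_ge_2: "2 \<le> n 1"
    and mono: "\<And>i j. 1 \<le> i \<Longrightarrow> i \<le> j \<Longrightarrow> j \<le> k \<Longrightarrow> n i \<le> n j"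
begin

abbreviation "V \<equiv> kpart_V k n"
abbreviation "E \<equiv> kpart_E k n"

definition part :: "nat \<Rightarrow> (nat \<times> nat) set" where
  "part j = {v \<in> V. fst v = j}"

lemma mem_V_iff: "x \<in> V \<longleftrightarrow> 1 \<le> fst x \<and> fst x \<le> k \<and> snd x < n (fst x)"
  by (cases x) (auto simp: kpart_V_def)

lemma edge_iff: "{x, y} \<in> E \<longleftrightarrow> x \<in> V \<and> y \<in> V \<and> fst x \<noteq> fst y"
  unfolding kpart_E_def by (intro iffI; (blast | auto simp: doubleton_eq_iff))

lemma n_ge_2: "1 \<le> j \<Longrightarrow> j \<le> k \<Longrightarrow> 2 \<le> n j"
  using mono[of 1 j] n1_ge_2 by auto

lemma n1_le_n2: "n 1 \<le> n 2"
  using mono[of 1 2] two_parts by auto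

lemma V_eq_Sigma: "V = Sigma {1..k} (\<lambda>i. {..<n i})"
  unfolding kpart_V_def by auto

lemma finite_V: "finite V"
  by (simp add: V_eq_Sigma)

lemma card_V: "card V = n 1 + (\<Sum>j=2..k. n j)"
  using two_parts by (simp add: V_eq_Sigma sum.atLeast_Suc_atMost numeral_2_eq_2)

lemma part_eq: "1 \<le> j \<Longrightarrow> j \<le> k \<Longrightarrow> part j = {j} \<times> {..<n j}"
  unfolding part_def by (auto simp: mem_V_iff)

lemma card_part: "1 \<le> j \<Longrightarrow> j \<le> k \<Longrightarrow> card (part j) = n j"
  by (simp add: part_eq card_cartesian_product)

lemma ex_other_part: "x \<in> V \<Longrightarrow> \<exists>w\<in>V. fst w \<noteq> fst x"
proof -
  have "(1, 0) \<in> V" "(2, 0) \<in> V" using n_ge_2[of 1] n_ge_2[of 2] two_parts by (auto simp: mem_V_iff)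
  then show "\<exists>w\<in>V. fst w \<noteq> fst x" by (cases "fst x = 1") force+
qed

lemma is_path_edge: "x \<in> V \<Longrightarrow> y \<in> V \<Longrightarrow> fst x \<noteq> fst y \<Longrightarrow> is_path V E [x, y] x y"
  unfolding is_path_def by (auto simp: edge_iff)

lemma is_path_detour:
  "x \<in> V \<Longrightarrow> y \<in> V \<Longrightarrow> w \<in> V \<Longrightarrow> x \<noteq> y \<Longrightarrow> fst w \<noteq> fst x \<Longrightarrow> fst x = fst y
   \<Longrightarrow> is_path V E [x, w, y] x y"
  unfolding is_path_def by (auto simp: edge_iff less_Suc_eq nth_Cons split: nat.splits)

lemma is_path_same_part_length:
  "is_path V E p x y \<Longrightarrow> x \<noteq> y \<Longrightarrow> fst x = fst y \<Longrightarrow> 3 \<le> length p"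
  using is_path_length_ge_2[of V E p x y] is_path_length_2[of V E p x y]
  by (fastforce simp: edge_iff)

lemma is_shortest_path_edge:
  "x \<in> V \<Longrightarrow> y \<in> V \<Longrightarrow> fst x \<noteq> fst y \<Longrightarrow> is_shortest_path V E [x, y] x y"
  unfolding is_shortest_path_def using is_path_edge is_path_length_ge_2 by fastforce

lemma is_shortest_path_detour:
  "x \<in> V \<Longrightarrow> y \<in> V \<Longrightarrow> w \<in> V \<Longrightarrow> x \<noteq> y \<Longrightarrow> fst w \<noteq> fst x \<Longrightarrow> fst x = fst y
   \<Longrightarrow> is_shortest_path V E [x, w, y] x y"
  unfolding is_shortest_path_def using is_path_detour is_path_same_part_length
  by (simp add: numeral_3_eq_3)

lemma is_shortest_path_cases:
  assumes sp: "is_shortest_path V E p x y" and xy: "x \<noteq> y"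
  shows "fst x \<noteq> fst y \<and> p = [x, y] \<or> fst x = fst y \<and> (\<exists>w. p = [x, w, y] \<and> fst w \<noteq> fst x)"
proof -
  have path: "is_path V E p x y" and min: "\<And>q. is_path V E q x y \<Longrightarrow> length p \<le> length q"
    using sp unfolding is_shortest_path_def by auto
  have V: "x \<in> V" "y \<in> V" using path unfolding is_path_def using hd_in_set last_in_set by blast+
  show ?thesis
  proof (cases "fst x = fst y")
    case False
    then have "length p = 2"
      using min[OF is_path_edge[OF V False]] is_path_length_ge_2[OF path xy] by simp
    then show ?thesis using is_path_length_2[OF path] False by simp
  next
    case True
    obtain w where w: "w \<in> V" "fst w \<noteq> fst x" using ex_other_part[OF V(1)] by blast
    have "length p = 3"
      using min[OF is_path_detour[OF V w(1) xy w(2) True]] is_path_same_part_length[OF path xy True]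
      by simp
    then show ?thesis using is_path_length_3[OF path] True by (auto simp: edge_iff)
  qed
qed

lemma interior_vertex_of_shortest_path:
  assumes "is_shortest_path V E p x y \<or> is_shortest_path V E p y x" and "x \<noteq> y"
    and "{a, b} \<in> path_edges p" and "a \<notin> {x, y}"
  shows "b \<in> {x, y} \<and> fst x = fst y \<and> p ! 1 = a"
  using assms is_shortest_path_cases[of p x y] is_shortest_path_cases[of p y x]
  by (auto simp: path_edges_Cons_Cons path_edges_singleton doubleton_eq_iff)

definition skipped :: nat where
  "skipped = min (n 1) (max_edge_covers (n 2))"

definition covering_set :: "(nat \<times> nat) set" where
  "covering_set = {v \<in> V. \<not> (fst v = 1 \<and> snd v < skipped)}"

definition midpoint :: "nat \<times> nat \<Rightarrow> nat \<times> nat \<Rightarrow> nat \<times> nat" where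
  "midpoint u v =
     (if fst u = 1 then (2, 0)
      else let c = cover_colouring (n (fst u)) (snd u) (snd v) in if c < skipped then (1, c) else (1, 0))"

definition geodesic :: "nat \<times> nat \<Rightarrow> nat \<times> nat \<Rightarrow> (nat \<times> nat) list" where
  "geodesic u v = (if fst u \<noteq> fst v then [u, v] else [u, midpoint u v, v])"

definition assignment :: "(nat \<times> nat) set \<Rightarrow> (nat \<times> nat) list option" where
  "assignment e = Some (SOME p. \<exists>u v. e = {u, v} \<and> p = geodesic u v)"

lemma skipped_le_max_edge_covers: "2 \<le> j \<Longrightarrow> j \<le> k \<Longrightarrow> skipped \<le> max_edge_covers (n j)"
  using max_edge_covers_mono[OF mono[of 2 j]] unfolding skipped_def by fastforce

lemma midpoint_commute: "fst u = fst v \<Longrightarrow> midpoint u v = midpoint v u"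
  unfolding midpoint_def using cover_colouring_commute by (simp add: Let_def)

lemma midpoint_mem: "midpoint u v \<in> V" "fst (midpoint u v) \<noteq> fst u"
  using n_ge_2[of 1] n_ge_2[of 2] two_parts
  by (auto simp: midpoint_def Let_def mem_V_iff skipped_def)

lemma geodesic_shortest: "u \<in> V \<Longrightarrow> v \<in> V \<Longrightarrow> u \<noteq> v \<Longrightarrow> is_shortest_path V E (geodesic u v) u v"
  unfolding geodesic_def
  using is_shortest_path_edge[of u v] is_shortest_path_detour[of u v "midpoint u v"] midpoint_mem[of u v]
  by auto

lemma assignment_cases: "assignment {u, v} = Some p \<Longrightarrow> p = geodesic u v \<or> p = geodesic v u"
  unfolding assignment_def by (smt (verit) doubleton_eq_iff option.inject someI)

lemma edge_at_skipped_vertex_covered: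
  assumes a: "a \<in> V" "a \<notin> covering_set" and b: "b \<in> V" "fst a \<noteq> fst b"
  shows "\<exists>u\<in>covering_set. \<exists>v\<in>covering_set. u \<noteq> v \<and>
           (\<exists>p. assignment {u, v} = Some p \<and> {a, b} \<in> path_edges p)"
proof -
  obtain c where a_eq: "a = (1, c)" and c: "c < skipped" using a unfolding covering_set_def by (cases a) auto
  have j: "2 \<le> fst b" "fst b \<le> k" using b a_eq by (auto simp: mem_V_iff)
  have "c < max_edge_covers (n (fst b))" using c skipped_le_max_edge_covers[OF j] by simp
  with cover_colouring_surj[OF n_ge_2 this, of "snd b"] j b
  obtain c' where c': "c' < n (fst b)" "c' \<noteq> snd b" "cover_colouring (n (fst b)) (snd b) c' = c"
    by (auto simp: mem_V_iff)
  define b' where "b' = (fst b, c')"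
  have S: "b \<in> covering_set" "b' \<in> covering_set"
    using b c' j unfolding covering_set_def b'_def by (auto simp: mem_V_iff)
  have "b \<noteq> b'" using c'(2) unfolding b'_def by (metis snd_conv)
  have "midpoint b b' = a" "midpoint b' b = a"
    using midpoint_commute[of b b'] c c' j a_eq unfolding midpoint_def b'_def by auto
  moreover obtain p where p: "assignment {b, b'} = Some p" by (simp add: assignment_def)
  ultimately have "{a, b} \<in> path_edges p"
    using assignment_cases[OF p] unfolding geodesic_def b'_def
    by (auto simp: path_edges_Cons_Cons insert_commute)
  with S \<open>b \<noteq> b'\<close> p show ?thesis by blast
qed

lemma strong_edge_geodetic_covering_set: "strong_edge_geodetic V E covering_set"
  unfolding strong_edge_geodetic_def
proof (intro conjI exI[of _ assignment] ballI impI allI)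
  show "covering_set \<subseteq> V" unfolding covering_set_def by auto
next
  fix u v p
  assume "u \<in> covering_set" "v \<in> covering_set" "u \<noteq> v" "assignment {u, v} = Some p"
  then show "is_shortest_path V E p u v \<or> is_shortest_path V E p v u"
    using assignment_cases geodesic_shortest unfolding covering_set_def by fastforce
next
  fix e assume "e \<in> E"
  then obtain a b where e: "e = {a, b}" "a \<in> V" "b \<in> V" "fst a \<noteq> fst b"
    unfolding kpart_E_def by auto
  consider "a \<in> covering_set" "b \<in> covering_set" | "a \<notin> covering_set" | "b \<notin> covering_set" by blast
  then show "\<exists>u\<in>covering_set. \<exists>v\<in>covering_set. u \<noteq> v \<and>
               (\<exists>p. assignment {u, v} = Some p \<and> e \<in> path_edges p)"
  proof cases
    case 1
    obtain p where p: "assignment {a, b} = Some p" by (simp add: assignment_def)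
    then have "e \<in> path_edges p"
      using assignment_cases[OF p] e unfolding geodesic_def
      by (auto simp: path_edges_Cons_Cons path_edges_singleton insert_commute)
    moreover have "a \<noteq> b" using e(4) by blast
    ultimately show ?thesis using 1 p by blast
  next
    case 2
    then show ?thesis using edge_at_skipped_vertex_covered[OF e(2) 2 e(3,4)] e(1) by simp
  next
    case 3
    then show ?thesis
      using edge_at_skipped_vertex_covered[OF e(3) 3 e(2) e(4)[symmetric]] e(1) by (simp add: insert_commute)
  qed
qed

lemma card_covering_set: "card covering_set = card V - skipped"
proof -
  have "V - covering_set = {1} \<times> {..<skipped}"
    using two_parts unfolding covering_set_def skipped_def by (auto simp: mem_V_iff)
  then have "card (V - covering_set) = skipped" by (simp add: card_cartesian_product)
  moreover have "covering_set \<subseteq> V" unfolding covering_set_def by auto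
  ultimately show ?thesis using finite_V by (metis card_Diff_subset diff_diff_cancel card_mono finite_subset)
qed

context
  fixes S :: "(nat \<times> nat) set" and P :: "(nat \<times> nat) set \<Rightarrow> (nat \<times> nat) list option"
  assumes S_sub: "S \<subseteq> V"
    and P_shortest: "\<forall>u\<in>S. \<forall>v\<in>S. u \<noteq> v \<longrightarrow>
          (\<forall>p. P {u, v} = Some p \<longrightarrow> is_shortest_path V E p u v \<or> is_shortest_path V E p v u)"
    and P_covers: "\<forall>e\<in>E. \<exists>u\<in>S. \<exists>v\<in>S. u \<noteq> v \<and> (\<exists>p. P {u, v} = Some p \<and> e \<in> path_edges p)"
begin

lemma uncovered_edge_route:
  assumes a: "a \<in> V - S" and ab: "{a, b} \<in> E"
  shows "\<exists>u v p. u \<in> S \<and> v \<in> S \<and> u \<noteq> v \<and> P {u, v} = Some p \<and>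
           b \<in> {u, v} \<and> fst u = fst v \<and> p ! 1 = a"
proof -
  obtain u v p where uv: "u \<in> S" "v \<in> S" "u \<noteq> v" "P {u, v} = Some p" "{a, b} \<in> path_edges p"
    using P_covers ab by blast
  moreover have "a \<notin> {u, v}" using a uv by auto
  ultimately show ?thesis using interior_vertex_of_shortest_path[of p u v a b] P_shortest by blast
qed

lemma uncovered_same_part:
  assumes "a \<in> V - S" "b \<in> V - S" shows "fst a = fst b"
proof (rule ccontr)
  assume "fst a \<noteq> fst b"
  then have "{a, b} \<in> E" using assms by (simp add: edge_iff)
  then show False using uncovered_edge_route[OF assms(1)] assms(2) by blast
qed

text \<open>A geodesic has a single interior vertex, so the edge covers of part \<open>j\<close> formed by the
  routes through distinct uncovered vertices are disjoint.\<close>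
lemma card_uncovered_le:
  assumes a0: "a0 \<in> V - S" and j: "1 \<le> j" "j \<le> k" "j \<noteq> fst a0"
  shows "card (V - S) \<le> max_edge_covers (n j)"
proof -
  define F where "F a = {e. e \<subseteq> part j \<and> card e = 2 \<and> (\<exists>p. P e = Some p \<and> p ! 1 = a)}" for a
  have "card (V - S) \<le> max_edge_covers (card (part j))"
  proof (rule card_disjoint_edge_covers_le)
    show "finite (part j)" using j by (simp add: part_eq)
    show "2 \<le> card (part j)" using j card_part n_ge_2 by simp
    show "F a \<subseteq> {e. e \<subseteq> part j \<and> card e = 2}" for a unfolding F_def by auto
    show "disjoint_family_on F (V - S)" unfolding disjoint_family_on_def F_def by auto
    show "part j \<subseteq> \<Union>(F a)" if a: "a \<in> V - S" for a
    proof
      fix b assume b: "b \<in> part j"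
      have "fst a = fst a0" using uncovered_same_part[OF a a0] .
      then have "{a, b} \<in> E" using a b j unfolding part_def by (auto simp: edge_iff)
      then obtain u v p where uv: "u \<in> S" "v \<in> S" "u \<noteq> v" "P {u, v} = Some p"
          "b \<in> {u, v}" "fst u = fst v" "p ! 1 = a"
        using uncovered_edge_route[OF a] by blast
      then have "{u, v} \<subseteq> part j" using b S_sub unfolding part_def by auto
      with uv have "{u, v} \<in> F a" unfolding F_def by auto
      with uv(5) show "b \<in> \<Union>(F a)" by blast
    qed
  qed
  then show ?thesis using card_part j by simp
qed

end

lemma card_uncovered_le_skipped:
  assumes "strong_edge_geodetic V E S" shows "card (V - S) \<le> skipped"
proof (cases "V \<subseteq> S")
  case True
  then show ?thesis by (simp add: Diff_eq_empty_iff[THEN iffD2])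
next
  case False
  have S_sub: "S \<subseteq> V" using assms unfolding strong_edge_geodetic_def by simp
  obtain P where P_shortest: "\<forall>u\<in>S. \<forall>v\<in>S. u \<noteq> v \<longrightarrow>
          (\<forall>p. P {u, v} = Some p \<longrightarrow> is_shortest_path V E p u v \<or> is_shortest_path V E p v u)"
    and P_covers: "\<forall>e\<in>E. \<exists>u\<in>S. \<exists>v\<in>S. u \<noteq> v \<and> (\<exists>p. P {u, v} = Some p \<and> e \<in> path_edges p)"
    using assms unfolding strong_edge_geodetic_def by (elim conjE exE) blast
  note card_le = card_uncovered_le[OF S_sub P_shortest P_covers]
  from False obtain a0 where a0: "a0 \<in> V - S" by blast
  then have i: "1 \<le> fst a0" "fst a0 \<le> k" by (auto simp: mem_V_iff)
  show ?thesis
  proof (cases "fst a0 = 1")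
    case True
    have "V - S \<subseteq> part 1"
      using uncovered_same_part[OF S_sub P_shortest P_covers _ a0] True unfolding part_def by auto
    then have "card (V - S) \<le> n 1"
      using card_mono[of "part 1"] card_part[of 1] two_parts by (simp add: part_eq)
    moreover have "card (V - S) \<le> max_edge_covers (n 2)" using card_le[OF a0] True two_parts by simp
    ultimately show ?thesis unfolding skipped_def by simp
  next
    case False
    then have "card (V - S) \<le> max_edge_covers (n 1)" using card_le[OF a0] two_parts by simp
    then show ?thesis
      using max_edge_covers_le[of "n 1"] max_edge_covers_mono[OF n1_le_n2] unfolding skipped_def by simp
  qed
qed

lemma sg_e_eq: "sg_e V E = card V - skipped"
  unfolding sg_e_def
proof (rule Least_equality)
  have "finite covering_set" using finite_V unfolding covering_set_def by simp
  then show "\<exists>S. finite S \<and> strong_edge_geodetic V E S \<and> card S = card V - skipped"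
    using strong_edge_geodetic_covering_set card_covering_set by blast
next
  fix m assume "\<exists>S. finite S \<and> strong_edge_geodetic V E S \<and> card S = m"
  then obtain S where S: "finite S" "strong_edge_geodetic V E S" "card S = m" by blast
  have "card V \<le> card (S \<union> (V - S))" using S(1) finite_V by (intro card_mono) auto
  also have "\<dots> \<le> card S + card (V - S)" by (rule card_Un_le)
  finally show "card V - skipped \<le> m" using card_uncovered_le_skipped[OF S(2)] S(3) by linarith
qed

end

theorem mainTheorem7:
  fixes k :: nat and n :: "nat \<Rightarrow> nat"
  assumes "k \<ge> 2" and "n 1 \<ge> 2"
    and "\<And>i j. 1 \<le> i \<Longrightarrow> i \<le> j \<Longrightarrow> j \<le> k \<Longrightarrow> n i \<le> n j"
  shows "(even (n 1) \<longrightarrow> sg_e (kpart_V k n) (kpart_E k n) =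
            (if n 2 \<in> {n 1, n 1 + 1} then (\<Sum>j=2..k. n j) + 1 else (\<Sum>j=2..k. n j)))
       \<and> (odd (n 1) \<longrightarrow> sg_e (kpart_V k n) (kpart_E k n) =
            (if n 2 = n 1 then (\<Sum>j=2..k. n j) + 2 else (\<Sum>j=2..k. n j)))"
proof -
  interpret complete_multipartite k n using assms by unfold_locales
  have "sg_e (kpart_V k n) (kpart_E k n) = n 1 + (\<Sum>j=2..k. n j) - min (n 1) (max_edge_covers (n 2))"
    using sg_e_eq card_V unfolding skipped_def by simp
  then show ?thesis using min_max_edge_covers[OF n1_ge_2 n1_le_n2] n1_ge_2 by auto
qed

end
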